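(* For any finite simple graph $G$, the quotient of the separated deleted join $\widetilde Z(G)$ of the flag complex $\overline G$ by its free involution $\iota$ equals $Z(G)$. Consequently $\widetilde Z(G)$ is a double cover of $Z(G)$.
   Context: $\overline G$ is the flag (clique) complex of $G$. $\widetilde Z(G)$ is the simplicial complex on $V(G) \times \{-1,+1\}$ whose faces are $(\sigma \times \{-1\}) \cup (\rho \times \{+1\})$ for (possibly empty) cliques $\sigma,\rho$ of $G$ that are disjoint and have no edge of $G$ between them; $\iota$ swaps $(v,-1)$ and $(v,+1)$, and the quotient is the simplicial complex on $V(G)$ whose faces are the images of faces of $\widetilde Z(G)$. $Z(G)$ is the simplicial complex on $V(G)$ with complete 1-skeleton, in which a triangle is a face if and only if an odd number of its edges lie in $G$, and a simplex of dimension at least $2$ is a face if and only if all its triangles are faces. *)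

theory Defs
  imports Main
begin

definition simple_graph :: "'a set \<Rightarrow> ('a \<Rightarrow> 'a \<Rightarrow> bool) \<Rightarrow> bool" where
  "simple_graph V E \<longleftrightarrow> finite V \<and> (\<forall>x y. E x y \<longrightarrow> x \<in> V \<and> y \<in> V)
     \<and> (\<forall>x y. E x y \<longrightarrow> E y x) \<and> (\<forall>x. \<not> E x x)"

definition is_clique :: "'a set \<Rightarrow> ('a \<Rightarrow> 'a \<Rightarrow> bool) \<Rightarrow> 'a set \<Rightarrow> bool" where
  "is_clique V E S \<longleftrightarrow> S \<subseteq> V \<and> (\<forall>x\<in>S. \<forall>y\<in>S. x \<noteq> y \<longrightarrow> E x y)"

definition flag_complex :: "'a set \<Rightarrow> ('a \<Rightarrow> 'a \<Rightarrow> bool) \<Rightarrow> 'a set set" where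
  "flag_complex V E = {S. is_clique V E S}"

definition Ztilde :: "'a set \<Rightarrow> ('a \<Rightarrow> 'a \<Rightarrow> bool) \<Rightarrow> ('a \<times> int) set set" where
  "Ztilde V E = {(\<sigma> \<times> {-1}) \<union> (\<rho> \<times> {1}) | \<sigma> \<rho>.
      \<sigma> \<in> flag_complex V E \<and> \<rho> \<in> flag_complex V E \<and> \<sigma> \<inter> \<rho> = {}
      \<and> (\<forall>x\<in>\<sigma>. \<forall>y\<in>\<rho>. \<not> E x y)}"

definition iota :: "'a \<times> int \<Rightarrow> 'a \<times> int" where
  "iota p = (fst p, - snd p)"

(* Quotient complex on V: images of faces of Ztilde under the projection
(which identifies the two points of each iota-orbit). *)
definition Ztilde_quotient :: "'a set \<Rightarrow> ('a \<Rightarrow> 'a \<Rightarrow> bool) \<Rightarrow> 'a set set" where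
  "Ztilde_quotient V E = (\<lambda>F. fst ` F) ` Ztilde V E"

definition num_edges_in :: "('a \<Rightarrow> 'a \<Rightarrow> bool) \<Rightarrow> 'a set \<Rightarrow> nat" where
  "num_edges_in E T = card {{x, y} | x y. x \<in> T \<and> y \<in> T \<and> E x y}"

definition Z :: "'a set \<Rightarrow> ('a \<Rightarrow> 'a \<Rightarrow> bool) \<Rightarrow> 'a set set" where
  "Z V E = {S. S \<subseteq> V \<and> (card S \<le> 2 \<or>
      (\<forall>T. T \<subseteq> S \<and> card T = 3 \<longrightarrow> odd (num_edges_in E T)))}"

end

theory Submission
  imports Defs
begin

(* A face of Ztilde(G) is a signed pair of cliques sigma, rho with no edge between them, so on
  S = sigma \<union> rho two distinct vertices are adjacent iff they lie on the same side. Hence every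
  triangle of S has one or three edges and S lies in Z(G). Conversely, if every triangle of S has
  an odd number of edges, then for a fixed a in S we get E x y \<longleftrightarrow> (E a x \<longleftrightarrow> E a y), so
  S splits into the closed neighbourhood of a and its complement; any split of S is this one
  up to exchanging the sides. So a nonempty face of Z(G) has exactly two preimages, which iota
  interchanges. *)

lemma simple_graph_symp: "simple_graph V E \<Longrightarrow> symp E"
  unfolding simple_graph_def symp_def by blast

lemma simple_graph_irreflp: "simple_graph V E \<Longrightarrow> irreflp E"
  unfolding simple_graph_def irreflp_def by blast

definition signed_face :: "'a set \<Rightarrow> 'a set \<Rightarrow> ('a \<times> int) set" where
  "signed_face \<sigma> \<rho> = \<sigma> \<times> {-1} \<union> \<rho> \<times> {1}"

lemma fst_image_signed_face: "fst ` signed_face \<sigma> \<rho> = \<sigma> \<union> \<rho>"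
  unfolding signed_face_def by force

lemma signed_face_eq_iff: "signed_face \<sigma> \<rho> = signed_face \<sigma>' \<rho>' \<longleftrightarrow> \<sigma> = \<sigma>' \<and> \<rho> = \<rho>'"
proof
  have sides: "\<sigma> = {x. (x, -1) \<in> signed_face \<sigma> \<rho>}" "\<rho> = {x. (x, 1) \<in> signed_face \<sigma> \<rho>}"
    for \<sigma> \<rho> :: "'a set"
    unfolding signed_face_def by auto
  show "signed_face \<sigma> \<rho> = signed_face \<sigma>' \<rho>' \<Longrightarrow> \<sigma> = \<sigma>' \<and> \<rho> = \<rho>'"
    using sides by metis
qed simp

lemma iota_image_signed_face: "iota ` signed_face \<sigma> \<rho> = signed_face \<rho> \<sigma>"
  unfolding signed_face_def iota_def by force

lemma inj_on_fst_signed_face: "\<sigma> \<inter> \<rho> = {} \<Longrightarrow> inj_on fst (signed_face \<sigma> \<rho>)"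
  unfolding signed_face_def inj_on_def by auto

definition separated_cliques :: "'a set \<Rightarrow> ('a \<Rightarrow> 'a \<Rightarrow> bool) \<Rightarrow> 'a set \<Rightarrow> 'a set \<Rightarrow> bool" where
  "separated_cliques V E \<sigma> \<rho> \<longleftrightarrow> is_clique V E \<sigma> \<and> is_clique V E \<rho> \<and> \<sigma> \<inter> \<rho> = {}
     \<and> (\<forall>x\<in>\<sigma>. \<forall>y\<in>\<rho>. \<not> E x y)"

lemma Ztilde_eq: "Ztilde V E = {signed_face \<sigma> \<rho> | \<sigma> \<rho>. separated_cliques V E \<sigma> \<rho>}"
  unfolding Ztilde_def signed_face_def separated_cliques_def flag_complex_def by auto

lemma separated_cliques_swap:
  assumes "symp E" and "separated_cliques V E \<sigma> \<rho>"
  shows "separated_cliques V E \<rho> \<sigma>"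
  using assms sympD[OF assms(1)] unfolding separated_cliques_def by blast

lemma separated_cliques_adjacent_iff:
  assumes "symp E" and "separated_cliques V E \<sigma> \<rho>"
    and "x \<in> \<sigma> \<union> \<rho>" "y \<in> \<sigma> \<union> \<rho>" "x \<noteq> y"
  shows "E x y \<longleftrightarrow> (x \<in> \<sigma> \<longleftrightarrow> y \<in> \<sigma>)"
  using assms sympD[OF assms(1)] unfolding separated_cliques_def is_clique_def by blast

definition closed_neighbourhood :: "('a \<Rightarrow> 'a \<Rightarrow> bool) \<Rightarrow> 'a set \<Rightarrow> 'a \<Rightarrow> 'a set" where
  "closed_neighbourhood E S a = insert a {x \<in> S. E a x}"

lemma separated_cliques_eq_closed_neighbourhood:
  assumes "symp E" and "separated_cliques V E \<sigma> \<rho>" and "a \<in> \<sigma>"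
  shows "\<sigma> = closed_neighbourhood E (\<sigma> \<union> \<rho>) a"
  using separated_cliques_adjacent_iff[OF assms(1,2)] assms(3)
  unfolding closed_neighbourhood_def by blast

definition odd_triangles :: "('a \<Rightarrow> 'a \<Rightarrow> bool) \<Rightarrow> 'a set \<Rightarrow> bool" where
  "odd_triangles E S \<longleftrightarrow> (\<forall>a\<in>S. \<forall>b\<in>S. \<forall>c\<in>S. a \<noteq> b \<longrightarrow> b \<noteq> c \<longrightarrow> a \<noteq> c \<longrightarrow>
     (E a b \<longleftrightarrow> (E b c \<longleftrightarrow> E a c)))"

lemma num_edges_in_triangle:
  assumes "symp E" and "irreflp E"
    and distinct: "a \<noteq> b" "b \<noteq> c" "a \<noteq> c"
  shows "odd (num_edges_in E {a, b, c}) \<longleftrightarrow> (E a b \<longleftrightarrow> (E b c \<longleftrightarrow> E a c))"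
proof -
  have "{{x, y} | x y. x \<in> {a, b, c} \<and> y \<in> {a, b, c} \<and> E x y}
      = (if E a b then {{a, b}} else {}) \<union> (if E b c then {{b, c}} else {})
        \<union> (if E a c then {{a, c}} else {})"
    using assms(1,2) by (auto simp: insert_commute dest: sympD irreflpD)
  then have "num_edges_in E {a, b, c} = card ((if E a b then {{a, b}} else {})
      \<union> (if E b c then {{b, c}} else {}) \<union> (if E a c then {{a, c}} else {}))"
    unfolding num_edges_in_def by (rule arg_cong)
  then show ?thesis
    using distinct
    by (cases "E a b"; cases "E b c"; cases "E a c") (auto simp: doubleton_eq_iff card_insert_if)
qed

lemma mem_Z_iff:
  assumes G: "simple_graph V E"
  shows "S \<in> Z V E \<longleftrightarrow> S \<subseteq> V \<and> odd_triangles E S"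
proof -
  note triangle = num_edges_in_triangle[OF simple_graph_symp[OF G] simple_graph_irreflp[OF G]]
  have "odd_triangles E S"
    if S: "S \<subseteq> V" "card S \<le> 2 \<or> (\<forall>T. T \<subseteq> S \<and> card T = 3 \<longrightarrow> odd (num_edges_in E T))"
    unfolding odd_triangles_def
  proof (intro ballI impI)
    fix a b c assume abc: "a \<in> S" "b \<in> S" "c \<in> S" "a \<noteq> b" "b \<noteq> c" "a \<noteq> c"
    then have T: "{a, b, c} \<subseteq> S" "card {a, b, c} = 3"
      by auto
    have "finite S"
      using G S(1) finite_subset unfolding simple_graph_def by blast
    then have "card S \<ge> 3"
      using card_mono[OF _ T(1)] T(2) by simp
    then have "odd (num_edges_in E {a, b, c})"
      using S(2) T by auto
    then show "E a b \<longleftrightarrow> (E b c \<longleftrightarrow> E a c)"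
      using triangle abc(4-6) by blast
  qed
  moreover have "odd (num_edges_in E T)"
    if "odd_triangles E S" "T \<subseteq> S" "card T = 3" for T
  proof -
    obtain a b c where "T = {a, b, c}" "a \<noteq> b" "b \<noteq> c" "a \<noteq> c"
      using \<open>card T = 3\<close> card_3_iff by metis
    then show ?thesis
      using that triangle unfolding odd_triangles_def by auto
  qed
  ultimately show ?thesis
    unfolding Z_def by blast
qed

lemma separated_cliques_odd_triangles:
  assumes "symp E" and "separated_cliques V E \<sigma> \<rho>"
  shows "odd_triangles E (\<sigma> \<union> \<rho>)"
  using separated_cliques_adjacent_iff[OF assms] unfolding odd_triangles_def by blast

lemma odd_triangles_separated_cliques:
  assumes "symp E" and "S \<subseteq> V" "odd_triangles E S" "a \<in> S"
  defines "N \<equiv> closed_neighbourhood E S a"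
  shows "separated_cliques V E N (S - N)"
proof -
  have key: "E x y \<longleftrightarrow> (E a x \<longleftrightarrow> E a y)"
    if "x \<in> S" "y \<in> S" "a \<noteq> x" "x \<noteq> y" "a \<noteq> y" for x y
    using assms(3,4) that unfolding odd_triangles_def by blast
  have N: "x \<in> N \<longleftrightarrow> x = a \<or> x \<in> S \<and> E a x" for x
    unfolding N_def closed_neighbourhood_def by blast
  have "N \<subseteq> S"
    using N assms(4) by auto
  have "E x y" if "x \<in> N" "y \<in> N" "x \<noteq> y" for x y
    using that N key[of x y] sympD[OF assms(1)] by auto
  then have "is_clique V E N"
    unfolding is_clique_def using \<open>N \<subseteq> S\<close> assms(2) by blast
  moreover have "E x y" if "x \<in> S - N" "y \<in> S - N" "x \<noteq> y" for x y
    using that N key[of x y] by auto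
  then have "is_clique V E (S - N)"
    unfolding is_clique_def using assms(2) by blast
  moreover have "\<not> E x y" if "x \<in> N" "y \<in> S - N" for x y
    using that N key[of x y] by auto
  moreover have "N \<inter> (S - N) = {}"
    by blast
  ultimately show ?thesis
    unfolding separated_cliques_def by blast
qed

lemma Ztilde_fibre:
  assumes G: "simple_graph V E" and S: "S \<in> Z V E" and a: "a \<in> S"
  defines "N \<equiv> closed_neighbourhood E S a"
  shows "{F \<in> Ztilde V E. fst ` F = S} = {signed_face N (S - N), signed_face (S - N) N}"
proof -
  note sym = simple_graph_symp[OF G]
  have "N \<subseteq> S"
    using a unfolding N_def closed_neighbourhood_def by auto
  then have "fst ` signed_face N (S - N) = S" "fst ` signed_face (S - N) N = S"
    unfolding fst_image_signed_face by auto
  moreover have "separated_cliques V E N (S - N)"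
    unfolding N_def using odd_triangles_separated_cliques[OF sym] S a mem_Z_iff[OF G] by blast
  then have "signed_face N (S - N) \<in> Ztilde V E" "signed_face (S - N) N \<in> Ztilde V E"
    unfolding Ztilde_eq using separated_cliques_swap[OF sym] by blast+
  moreover have "F = signed_face N (S - N) \<or> F = signed_face (S - N) N"
    if "F \<in> Ztilde V E" "fst ` F = S" for F
  proof -
    obtain \<sigma> \<rho> where F: "F = signed_face \<sigma> \<rho>" and sep: "separated_cliques V E \<sigma> \<rho>"
      using \<open>F \<in> Ztilde V E\<close> unfolding Ztilde_eq by blast
    then have S_eq: "\<sigma> \<union> \<rho> = S" and disj: "\<sigma> \<inter> \<rho> = {}"
      using \<open>fst ` F = S\<close> unfolding F fst_image_signed_face separated_cliques_def by simp_all
    consider "a \<in> \<sigma>" | "a \<in> \<rho>"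
      using a S_eq by blast
    then show ?thesis
    proof cases
      case 1
      have "\<sigma> = N"
        using separated_cliques_eq_closed_neighbourhood[OF sym sep 1] unfolding S_eq N_def .
      moreover have "\<rho> = S - \<sigma>"
        using S_eq disj by blast
      ultimately show ?thesis
        unfolding F by simp
    next
      case 2
      have "\<rho> = N"
        using separated_cliques_eq_closed_neighbourhood[OF sym separated_cliques_swap[OF sym sep] 2]
        unfolding Un_commute[of \<rho>] S_eq N_def .
      moreover have "\<sigma> = S - \<rho>"
        using S_eq disj by blast
      ultimately show ?thesis
        unfolding F by simp
    qed
  qed
  ultimately show ?thesis
    by blast
qed

lemma card_Ztilde_fibre:
  assumes G: "simple_graph V E" and "S \<in> Z V E" "S \<noteq> {}"
  shows "card {F \<in> Ztilde V E. fst ` F = S} = 2"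
proof -
  obtain a where a: "a \<in> S"
    using \<open>S \<noteq> {}\<close> by blast
  define N where "N = closed_neighbourhood E S a"
  have "N \<noteq> S - N"
    using a unfolding N_def closed_neighbourhood_def by blast
  then have "signed_face N (S - N) \<noteq> signed_face (S - N) N"
    by (simp add: signed_face_eq_iff)
  then show ?thesis
    using Ztilde_fibre[OF G \<open>S \<in> Z V E\<close> a] unfolding N_def by simp
qed

lemma Ztilde_quotient_eq_Z:
  assumes G: "simple_graph V E"
  shows "Ztilde_quotient V E = Z V E"
proof
  show "Ztilde_quotient V E \<subseteq> Z V E"
  proof
    fix S assume "S \<in> Ztilde_quotient V E"
    then obtain F where "F \<in> Ztilde V E" "S = fst ` F"
      unfolding Ztilde_quotient_def by blast
    then obtain \<sigma> \<rho> where S: "S = \<sigma> \<union> \<rho>" and sep: "separated_cliques V E \<sigma> \<rho>"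
      unfolding Ztilde_eq by (auto simp: fst_image_signed_face)
    have "\<sigma> \<union> \<rho> \<subseteq> V"
      using sep unfolding separated_cliques_def is_clique_def by blast
    moreover have "odd_triangles E (\<sigma> \<union> \<rho>)"
      using simple_graph_symp[OF G] sep by (rule separated_cliques_odd_triangles)
    ultimately show "S \<in> Z V E"
      unfolding S mem_Z_iff[OF G] by blast
  qed
next
  show "Z V E \<subseteq> Ztilde_quotient V E"
  proof
    fix S assume S: "S \<in> Z V E"
    have "\<exists>F \<in> Ztilde V E. fst ` F = S"
    proof (cases "S = {}")
      case True
      have "separated_cliques V E {} {}"
        unfolding separated_cliques_def is_clique_def by simp
      then have "signed_face {} {} \<in> Ztilde V E"
        unfolding Ztilde_eq by blast
      moreover have "fst ` signed_face {} {} = S"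
        using True by (simp add: fst_image_signed_face)
      ultimately show ?thesis
        by blast
    next
      case False
      have "card {F \<in> Ztilde V E. fst ` F = S} = 2"
        using G S False by (rule card_Ztilde_fibre)
      then have "{F \<in> Ztilde V E. fst ` F = S} \<noteq> {}"
        by force
      then show ?thesis
        by blast
    qed
    then show "S \<in> Ztilde_quotient V E"
      unfolding Ztilde_quotient_def by force
  qed
qed

theorem theorem3p3:
  fixes V :: "'a set" and E :: "'a \<Rightarrow> 'a \<Rightarrow> bool"
  assumes "simple_graph V E"
  shows "Ztilde_quotient V E = Z V E
    \<and> (\<forall>F\<in>Ztilde V E. inj_on fst F \<and> iota ` F \<in> Ztilde V E \<and> (F \<noteq> {} \<longrightarrow> iota ` F \<noteq> F))
    \<and> (\<forall>\<tau>\<in>Z V E. \<tau> \<noteq> {} \<longrightarrow> card {F \<in> Ztilde V E. fst ` F = \<tau>} = 2)"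
proof (intro conjI ballI impI)
  show "Ztilde_quotient V E = Z V E"
    using assms by (rule Ztilde_quotient_eq_Z)
next
  fix F assume "F \<in> Ztilde V E"
  then obtain \<sigma> \<rho> where F: "F = signed_face \<sigma> \<rho>" and sep: "separated_cliques V E \<sigma> \<rho>"
    unfolding Ztilde_eq by blast
  then have disj: "\<sigma> \<inter> \<rho> = {}"
    unfolding separated_cliques_def by blast
  show "inj_on fst F"
    unfolding F using disj by (rule inj_on_fst_signed_face)
  show "iota ` F \<in> Ztilde V E"
    unfolding F iota_image_signed_face Ztilde_eq
    using separated_cliques_swap[OF simple_graph_symp[OF assms] sep] by blast
  assume "F \<noteq> {}"
  then show "iota ` F \<noteq> F"
    unfolding F iota_image_signed_face signed_face_eq_iff using disj
    by (auto simp: signed_face_def)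
next
  fix \<tau> assume "\<tau> \<in> Z V E" "\<tau> \<noteq> {}"
  then show "card {F \<in> Ztilde V E. fst ` F = \<tau>} = 2"
    using card_Ztilde_fibre[OF assms] by blast
qed

end
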